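(* Let $(W,S)$ be a Coxeter system of rank $n$, $(s_1,\dots,s_n)$ an ordering of $S$; let $F_n$ be free on $f_1,\dots,f_n$, $g=f_1\cdots f_n$, $R$ the set of conjugates of $f_1,\dots,f_n$, $\pi:F_n\to W$ the morphism $f_i\mapsto s_i$, and $H\le B_n$ the stabilizer of $(s_1,\dots,s_n)\in W^n$ under the Hurwitz action. Then for every $\beta\in H$ and every $\tilde a\in[1,g]_R$ we have $\pi(\beta\star\tilde a)=\pi(\tilde a)$.
   Context: A Coxeter system $(W,S)$: $W=\langle S\mid (ss')^{m(s,s')}=1\text{ whenever } m(s,s')\neq\infty\rangle$ with $m$ symmetric, $m(s,s)=1$, $m(s,s')\in\{2,3,\dots,\infty\}$ for $s\neq s'$. For a group $G$ with generating set $X$: $\ell_X(a)$ is the minimal $k$ with $a=x_1\cdots x_k$, $x_i\in X\cup X^{-1}$; $a\le_X b$ iff $\ell_X(a)+\ell_X(a^{-1}b)=\ell_X(b)$; $[1,b]_X=\{a:a\le_Xb\}$. The Hurwitz action of $B_n$ on $G^n$: $\sigma_i\cdot(g_1,\dots,g_n)=(g_1,\dots,g_{i-1},g_ig_{i+1}g_i^{-1},g_i,g_{i+2},\dots,g_n)$. The action $\star$ of $B_n$ on $F_n$ by automorphisms is determined by $\sigma_i\star f_i=f_{i+1}$, $\sigma_i\star f_{i+1}=f_{i+1}^{-1}f_if_{i+1}$, $\sigma_i\star f_j=f_j$ for $j\notin\{i,i+1\}$. *)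

theory Defs
  imports Main "HOL-Library.Extended_Nat"
begin

text \<open>Words over the letters x_i^{+-1}; a letter (i, b) stands for x_i if b = False
  and for x_i^{-1} if b = True. Indices are 0-based: x_0, ..., x_(n-1).\<close>

type_synonym word = "(nat \<times> bool) list"

definition inv_word :: "word \<Rightarrow> word" where
  "inv_word w = rev (map (\<lambda>(i, b). (i, \<not> b)) w)"

definition word_on :: "nat \<Rightarrow> word \<Rightarrow> bool" where
  "word_on n w \<longleftrightarrow> (\<forall>x \<in> set w. fst x < n)"

inductive grp_eq :: "word set \<Rightarrow> word \<Rightarrow> word \<Rightarrow> bool" for Rel :: "word set" where
  refl: "grp_eq Rel u u"
| sym: "grp_eq Rel u v \<Longrightarrow> grp_eq Rel v u"
| trans: "grp_eq Rel u v \<Longrightarrow> grp_eq Rel v w \<Longrightarrow> grp_eq Rel u w"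
| cancel: "grp_eq Rel (u @ [(i, b), (i, \<not> b)] @ v) (u @ v)"
| rel: "r \<in> Rel \<Longrightarrow> grp_eq Rel (u @ r @ v) (u @ v)"

abbreviation free_eq :: "word \<Rightarrow> word \<Rightarrow> bool" where
  "free_eq \<equiv> grp_eq {}"

definition coxeter_matrix :: "nat \<Rightarrow> (nat \<Rightarrow> nat \<Rightarrow> enat) \<Rightarrow> bool" where
  "coxeter_matrix n m \<longleftrightarrow>
     (\<forall>i<n. \<forall>j<n. m i j = m j i) \<and> (\<forall>i<n. m i i = 1) \<and>
     (\<forall>i<n. \<forall>j<n. i \<noteq> j \<longrightarrow> m i j \<ge> 2)"

definition cox_rels :: "nat \<Rightarrow> (nat \<Rightarrow> nat \<Rightarrow> enat) \<Rightarrow> word set" where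
  "cox_rels n m = {concat (replicate k [(i, False), (j, False)]) | i j k.
      i < n \<and> j < n \<and> m i j = enat k}"

text \<open>Equality in the Coxeter group W (the word x_i read as s_i); also the map \<pi>:
  \<pi>(a) = \<pi>(b) iff cox_eq n m a b.\<close>
abbreviation cox_eq :: "nat \<Rightarrow> (nat \<Rightarrow> nat \<Rightarrow> enat) \<Rightarrow> word \<Rightarrow> word \<Rightarrow> bool" where
  "cox_eq n m \<equiv> grp_eq (cox_rels n m)"

text \<open>Reflection-type generating set R of F_n: conjugates of f_i and of f_i^{-1}
  (i.e. R \<union> R^{-1}).\<close>
definition refl_word :: "nat \<Rightarrow> word \<Rightarrow> bool" where
  "refl_word n r \<longleftrightarrow> (\<exists>u i b. word_on n u \<and> i < n \<and> r = u @ [(i, b)] @ inv_word u)"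

definition lenR :: "nat \<Rightarrow> word \<Rightarrow> nat" where
  "lenR n a = (LEAST k. \<exists>rs. length rs = k \<and> (\<forall>r \<in> set rs. refl_word n r) \<and>
                  free_eq (concat rs) a)"

definition leR :: "nat \<Rightarrow> word \<Rightarrow> word \<Rightarrow> bool" where
  "leR n a b \<longleftrightarrow> lenR n a + lenR n (inv_word a @ b) = lenR n b"

definition gword :: "nat \<Rightarrow> word" where
  "gword n = map (\<lambda>i. (i, False)) [0..<n]"

definition intervalR :: "nat \<Rightarrow> word set" where
  "intervalR n = {a. word_on n a \<and> leR n a (gword n)}"

text \<open>Braid words: a letter (i, b) with Suc i < n stands for \<sigma>_(i+1)^{+-1} (0-based:
  it acts on positions i, i+1).\<close>
definition braid_word :: "nat \<Rightarrow> (nat \<times> bool) list \<Rightarrow> bool" where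
  "braid_word n \<beta> \<longleftrightarrow> (\<forall>x \<in> set \<beta>. Suc (fst x) < n)"

fun hur_gen :: "nat \<times> bool \<Rightarrow> word list \<Rightarrow> word list" where
  "hur_gen (i, False) ts =
     ts[i := ts ! i @ ts ! Suc i @ inv_word (ts ! i), Suc i := ts ! i]"
| "hur_gen (i, True) ts =
     ts[i := ts ! Suc i, Suc i := inv_word (ts ! Suc i) @ ts ! i @ ts ! Suc i]"

definition hurwitz :: "(nat \<times> bool) list \<Rightarrow> word list \<Rightarrow> word list" where
  "hurwitz \<beta> ts = foldr hur_gen \<beta> ts"

fun star_img :: "nat \<times> bool \<Rightarrow> nat \<Rightarrow> word" where
  "star_img (i, False) j =
     (if j = i then [(Suc i, False)]
      else if j = Suc i then [(Suc i, True), (i, False), (Suc i, False)]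
      else [(j, False)])"
| "star_img (i, True) j =
     (if j = i then [(i, False), (Suc i, False), (i, True)]
      else if j = Suc i then [(i, False)]
      else [(j, False)])"

definition apply_sub :: "(nat \<Rightarrow> word) \<Rightarrow> word \<Rightarrow> word" where
  "apply_sub \<phi> w = concat (map (\<lambda>(j, b). if b then inv_word (\<phi> j) else \<phi> j) w)"

definition star :: "(nat \<times> bool) list \<Rightarrow> word \<Rightarrow> word" where
  "star \<beta> w = foldr (\<lambda>c. apply_sub (star_img c)) \<beta> w"

definition sgens :: "nat \<Rightarrow> word list" where
  "sgens n = map (\<lambda>i. [(i, False)]) [0..<n]"

definition hurwitz_stab :: "nat \<Rightarrow> (nat \<Rightarrow> nat \<Rightarrow> enat) \<Rightarrow> (nat \<times> bool) list set" where
  "hurwitz_stab n m = {\<beta>. braid_word n \<beta> \<and>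
      list_all2 (cox_eq n m) (hurwitz \<beta> (sgens n)) (sgens n)}"

end

theory Submission
  imports Defs
begin

text \<open>The tuple of images \<open>(\<beta> \<star> f\<^sub>1, \<dots>, \<beta> \<star> f\<^sub>n)\<close> is the Hurwitz image of
  \<open>(f\<^sub>1, \<dots>, f\<^sub>n)\<close> under the inverse braid \<open>\<beta>\<^sup>-\<^sup>1\<close>. Applying \<open>\<pi>\<close> and using that the
  stabilizer \<open>H\<close> is closed under inverses, \<open>\<pi>(\<beta> \<star> f\<^sub>j) = s\<^sub>j = \<pi>(f\<^sub>j)\<close> for all \<open>j\<close>; since
  \<open>\<pi> \<circ> (\<beta> \<star> -)\<close> and \<open>\<pi>\<close> are homomorphisms agreeing on generators, they agree on every
  word in \<open>f\<^sub>1, \<dots>, f\<^sub>n\<close>.\<close>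

lemma inv_word_Nil [simp]: "inv_word [] = []"
  by (simp add: inv_word_def)

lemma inv_word_Cons: "inv_word ((i, b) # w) = inv_word w @ [(i, \<not> b)]"
  by (simp add: inv_word_def)

lemma inv_word_append [simp]: "inv_word (u @ v) = inv_word v @ inv_word u"
  by (simp add: inv_word_def)

lemma inv_word_inv_word [simp]: "inv_word (inv_word w) = w"
  by (induct w) (auto simp: inv_word_def)

declare grp_eq.trans [trans]

lemma grp_eq_append_context:
  assumes "grp_eq R u v"
  shows "grp_eq R (w @ u @ z) (w @ v @ z)"
  using assms
proof (induct rule: grp_eq.induct)
  case (cancel u i b v)
  show ?case using grp_eq.cancel[of R "w @ u" i b "v @ z"] by simp
next
  case (rel r u v)
  then show ?case using grp_eq.rel[of r R "w @ u" "v @ z"] by simp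
qed (auto intro: grp_eq.intros)

lemma grp_eq_append:
  assumes "grp_eq R u u'" and "grp_eq R v v'"
  shows "grp_eq R (u @ v) (u' @ v')"
proof -
  have "grp_eq R ([] @ u @ v) ([] @ u' @ v)" using assms(1) by (rule grp_eq_append_context)
  moreover have "grp_eq R (u' @ v @ []) (u' @ v' @ [])" using assms(2) by (rule grp_eq_append_context)
  ultimately show ?thesis by (auto intro: grp_eq.trans)
qed

lemma grp_eq_append_inv_word: "grp_eq R (w @ inv_word w) []"
proof (induct w)
  case Nil
  show ?case by (simp add: grp_eq.refl)
next
  case (Cons x w)
  obtain i b where x: "x = (i, b)" by (cases x)
  have "grp_eq R ([x] @ (w @ inv_word w) @ [(i, \<not> b)]) ([x] @ [] @ [(i, \<not> b)])"
    using Cons by (rule grp_eq_append_context)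
  moreover have "grp_eq R ([] @ [(i, b), (i, \<not> b)] @ []) ([] @ [])"
    by (rule grp_eq.cancel)
  ultimately show ?case using x by (simp add: inv_word_Cons) (metis grp_eq.trans)
qed

lemma grp_eq_inv_word_append: "grp_eq R (inv_word w @ w) []"
  using grp_eq_append_inv_word[of R "inv_word w"] by simp

lemma grp_eq_inv_word:
  assumes "grp_eq R u v"
  shows "grp_eq R (inv_word u) (inv_word v)"
proof -
  have "grp_eq R (inv_word u @ [] @ []) (inv_word u @ (v @ inv_word v) @ [])"
    by (intro grp_eq_append_context grp_eq.sym[OF grp_eq_append_inv_word])
  also have "grp_eq R \<dots> ([] @ (inv_word u @ u) @ inv_word v)"
    using grp_eq_append_context[OF grp_eq.sym[OF assms], of "inv_word u" "inv_word v"] by simp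
  also have "grp_eq R \<dots> ([] @ [] @ inv_word v)"
    by (intro grp_eq_append_context grp_eq_inv_word_append)
  finally show ?thesis by simp
qed

lemma apply_sub_Nil [simp]: "apply_sub \<phi> [] = []"
  by (simp add: apply_sub_def)

lemma apply_sub_append [simp]: "apply_sub \<phi> (u @ v) = apply_sub \<phi> u @ apply_sub \<phi> v"
  by (simp add: apply_sub_def)

lemma apply_sub_single [simp]:
  "apply_sub \<phi> [(j, b)] = (if b then inv_word (\<phi> j) else \<phi> j)"
  by (simp add: apply_sub_def)

lemma apply_sub_inv_word: "apply_sub \<phi> (inv_word w) = inv_word (apply_sub \<phi> w)"
  by (induct w) (auto simp: inv_word_Cons apply_sub_def)

lemma star_Nil [simp]: "star \<beta> [] = []"
  by (induct \<beta>) (auto simp: star_def)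

lemma star_append [simp]: "star \<beta> (u @ v) = star \<beta> u @ star \<beta> v"
  by (induct \<beta>) (auto simp: star_def)

lemma star_Cons: "w \<noteq> [] \<Longrightarrow> star \<beta> (x # w) = star \<beta> [x] @ star \<beta> w"
  using star_append[of \<beta> "[x]" w] by simp

lemma star_inv_word: "star \<beta> (inv_word w) = inv_word (star \<beta> w)"
  by (induct \<beta>) (auto simp: star_def apply_sub_inv_word)

lemma star_inverse_generator: "star \<beta> [(j, True)] = inv_word (star \<beta> [(j, False)])"
  using star_inv_word[of \<beta> "[(j, False)]"] by (simp add: inv_word_def)

lemma star_snoc: "star (\<beta> @ [c]) w = star \<beta> (apply_sub (star_img c) w)"
  by (simp add: star_def)

lemma star_grp_eq_self:
  assumes "word_on n w"
    and "\<And>j. j < n \<Longrightarrow> grp_eq R (star \<beta> [(j, False)]) [(j, False)]"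
  shows "grp_eq R (star \<beta> w) w"
  using assms(1)
proof (induct w)
  case Nil
  show ?case by (simp add: grp_eq.refl)
next
  case (Cons x w)
  obtain j b where x: "x = (j, b)" by (cases x)
  with Cons.prems have "j < n" and "word_on n w" by (auto simp: word_on_def)
  then have gen: "grp_eq R (star \<beta> [(j, False)]) [(j, False)]"
    and tail: "grp_eq R (star \<beta> w) w"
    using assms(2) Cons.hyps by auto
  have "grp_eq R (star \<beta> [x]) [x]"
  proof (cases b)
    case True
    have "grp_eq R (inv_word (star \<beta> [(j, False)])) (inv_word [(j, False)])"
      using gen by (rule grp_eq_inv_word)
    with True x show ?thesis by (simp add: star_inverse_generator inv_word_def)
  next
    case False
    with x gen show ?thesis by simp
  qed
  from grp_eq_append[OF this tail] show ?case
    using star_append[of \<beta> "[x]" w] by simp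
qed

lemma length_hur_gen [simp]: "length (hur_gen c ts) = length ts"
  by (cases c, cases "snd c") auto

lemma hurwitz_Nil [simp]: "hurwitz [] ts = ts"
  by (simp add: hurwitz_def)

lemma hurwitz_Cons [simp]: "hurwitz (c # \<beta>) ts = hur_gen c (hurwitz \<beta> ts)"
  by (simp add: hurwitz_def)

lemma hurwitz_append: "hurwitz (\<beta> @ \<gamma>) ts = hurwitz \<beta> (hurwitz \<gamma> ts)"
  by (simp add: hurwitz_def)

lemma length_hurwitz [simp]: "length (hurwitz \<beta> ts) = length ts"
  by (induct \<beta>) auto

lemma hur_gen_grp_eq_cong:
  assumes "list_all2 (grp_eq R) ts us" and "Suc i < length ts"
  shows "list_all2 (grp_eq R) (hur_gen (i, b) ts) (hur_gen (i, b) us)"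
proof -
  have "length us = length ts" and "\<And>k. k < length ts \<Longrightarrow> grp_eq R (ts ! k) (us ! k)"
    using assms(1) by (auto simp: list_all2_conv_all_nth)
  with assms(2) show ?thesis
    by (cases b) (auto simp: list_all2_conv_all_nth nth_list_update
        intro!: grp_eq_append grp_eq_inv_word)
qed

lemma hurwitz_grp_eq_cong:
  assumes "list_all2 (grp_eq R) ts us" and "braid_word (length ts) \<beta>"
  shows "list_all2 (grp_eq R) (hurwitz \<beta> ts) (hurwitz \<beta> us)"
  using assms(2)
proof (induct \<beta>)
  case Nil
  with assms(1) show ?case by simp
next
  case (Cons c \<beta>)
  then show ?case
    by (cases c) (auto simp: braid_word_def intro: hur_gen_grp_eq_cong)
qed

text \<open>Braid words use the letter encoding of group words, so \<^const>\<open>inv_word\<close> also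
  inverts a braid word.\<close>

lemma hur_gen_inverse_letter:
  assumes "Suc i < length ts"
  shows "list_all2 (grp_eq R) (hur_gen (i, \<not> b) (hur_gen (i, b) ts)) ts"
proof -
  have conj_cancel: "grp_eq R (inv_word x @ (x @ y @ inv_word x) @ x) y"
    "grp_eq R (x @ (inv_word x @ y @ x) @ inv_word x) y" for x y
    using grp_eq_append[OF grp_eq_append[OF grp_eq_inv_word_append grp_eq.refl]
        grp_eq_inv_word_append, of R x y x]
      grp_eq_append[OF grp_eq_append[OF grp_eq_append_inv_word grp_eq.refl]
        grp_eq_append_inv_word, of R x y x]
    by simp_all
  with assms show ?thesis
    by (cases b) (auto simp: list_all2_conv_all_nth nth_list_update intro: grp_eq.refl)
qed

lemma hurwitz_inv_word_hurwitz:
  assumes "braid_word (length ts) \<beta>"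
  shows "list_all2 (grp_eq R) (hurwitz (inv_word \<beta>) (hurwitz \<beta> ts)) ts"
  using assms
proof (induct \<beta>)
  case Nil
  show ?case by (simp add: list.rel_refl grp_eq.refl)
next
  case (Cons c \<beta>)
  obtain i b where c: "c = (i, b)" by (cases c)
  with Cons.prems have i: "Suc i < length ts" and \<beta>: "braid_word (length ts) \<beta>"
    by (auto simp: braid_word_def)
  have inv_\<beta>: "braid_word (length ts) (inv_word \<beta>)"
    using \<beta> by (auto simp: braid_word_def inv_word_def)
  have "list_all2 (grp_eq R)
      (hurwitz (inv_word \<beta>) (hur_gen (i, \<not> b) (hur_gen (i, b) (hurwitz \<beta> ts))))
      (hurwitz (inv_word \<beta>) (hurwitz \<beta> ts))"
    using i inv_\<beta> by (intro hurwitz_grp_eq_cong hur_gen_inverse_letter) simp_all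
  with Cons.hyps[OF \<beta>] c show ?case
    by (simp add: inv_word_Cons hurwitz_append list_all2_trans[OF grp_eq.trans])
qed

lemma hurwitz_inv_word_fixes:
  assumes "braid_word (length ts) \<beta>" and "list_all2 (grp_eq R) (hurwitz \<beta> ts) ts"
  shows "list_all2 (grp_eq R) (hurwitz (inv_word \<beta>) ts) ts"
proof -
  have "list_all2 (grp_eq R) ts (hurwitz \<beta> ts)"
    using assms(2) by (auto simp: list_all2_conv_all_nth intro: grp_eq.sym)
  moreover have "braid_word (length ts) (inv_word \<beta>)"
    using assms(1) by (auto simp: braid_word_def inv_word_def)
  ultimately have "list_all2 (grp_eq R) (hurwitz (inv_word \<beta>) ts)
      (hurwitz (inv_word \<beta>) (hurwitz \<beta> ts))"
    by (rule hurwitz_grp_eq_cong)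
  with hurwitz_inv_word_hurwitz[OF assms(1)] show ?thesis
    by (auto intro: list_all2_trans[OF grp_eq.trans])
qed

definition star_generators :: "(nat \<times> bool) list \<Rightarrow> nat \<Rightarrow> word list" where
  "star_generators \<beta> n = map (\<lambda>j. star \<beta> [(j, False)]) [0..<n]"

lemma star_generators_snoc:
  assumes "Suc i < n"
  shows "star_generators (\<beta> @ [(i, b)]) n = hur_gen (i, \<not> b) (star_generators \<beta> n)"
proof (rule nth_equalityI)
  fix k assume "k < length (star_generators (\<beta> @ [(i, b)]) n)"
  then have "k < n" by (simp add: star_generators_def)
  with assms show "star_generators (\<beta> @ [(i, b)]) n ! k = hur_gen (i, \<not> b) (star_generators \<beta> n) ! k"
    by (cases b) (simp_all add: star_generators_def nth_list_update star_snoc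
        star_inverse_generator star_Cons)
qed (simp add: star_generators_def)

lemma star_generators_eq_hurwitz_inv_word:
  assumes "braid_word n \<beta>"
  shows "star_generators \<beta> n = hurwitz (inv_word \<beta>) (sgens n)"
  using assms
proof (induct \<beta> rule: rev_induct)
  case Nil
  show ?case by (simp add: star_generators_def sgens_def star_def)
next
  case (snoc c \<beta>)
  obtain i b where c: "c = (i, b)" by (cases c)
  with snoc.prems have "Suc i < n" and "braid_word n \<beta>" by (auto simp: braid_word_def)
  with snoc.hyps c show ?case by (simp add: star_generators_snoc inv_word_Cons)
qed

theorem proposition4p8:
  fixes n :: nat and m :: "nat \<Rightarrow> nat \<Rightarrow> enat"
    and \<beta> :: "(nat \<times> bool) list" and a :: word
  assumes "coxeter_matrix n m"
    and "\<beta> \<in> hurwitz_stab n m"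
    and "a \<in> intervalR n"
  shows "cox_eq n m (star \<beta> a) a"
proof -
  from assms(2) have braid: "braid_word n \<beta>"
    and stab: "list_all2 (cox_eq n m) (hurwitz \<beta> (sgens n)) (sgens n)"
    by (auto simp: hurwitz_stab_def)
  have "length (sgens n) = n" by (simp add: sgens_def)
  with braid have "list_all2 (cox_eq n m) (hurwitz (inv_word \<beta>) (sgens n)) (sgens n)"
    using hurwitz_inv_word_fixes[OF _ stab] by simp
  then have "list_all2 (cox_eq n m) (star_generators \<beta> n) (sgens n)"
    by (simp only: star_generators_eq_hurwitz_inv_word[OF braid])
  then have "cox_eq n m (star \<beta> [(j, False)]) [(j, False)]" if "j < n" for j
    using that by (simp add: list_all2_conv_all_nth star_generators_def sgens_def)
  moreover from assms(3) have "word_on n a" by (simp add: intervalR_def)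
  ultimately show ?thesis by (rule star_grp_eq_self[rotated])
qed
end
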